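(* Let $p,q$ be positive integers with $2\le p/q<4$, and let $f,g$ be $(p,q)$-colourings of a connected graph $G$. If $f$ reconfigures to $g$, then there is a reconfiguration sequence from $f$ to $g$ of length $O(|V(G)|^2)$.
   Context: A $(p,q)$-colouring of $G$ is a map $f:V(G)\to\{0,\dots,p-1\}$ with $q\le|f(u)-f(v)|\le p-q$ for every edge $uv$. A reconfiguration sequence from $f$ to $g$ is a sequence $f=f_0,\dots,f_n=g$ of $(p,q)$-colourings in which consecutive colourings differ on at most one vertex; $f$ reconfigures to $g$ if one exists. The implicit constant may depend on $p,q$. *)

theory Defs
  imports Main
begin

definition simple_graph :: "'a set \<Rightarrow> ('a \<Rightarrow> 'a \<Rightarrow> bool) \<Rightarrow> bool" where
  "simple_graph V E \<longleftrightarrow> finite V \<and> (\<forall>u v. E u v \<longrightarrow> u \<in> V \<and> v \<in> V)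
     \<and> (\<forall>u v. E u v \<longrightarrow> E v u) \<and> (\<forall>v. \<not> E v v)"

definition graph_connected :: "'a set \<Rightarrow> ('a \<Rightarrow> 'a \<Rightarrow> bool) \<Rightarrow> bool" where
  "graph_connected V E \<longleftrightarrow>
     (\<forall>u\<in>V. \<forall>v\<in>V. (u, v) \<in> {(x, y). E x y}\<^sup>*)"

definition pq_colouring :: "nat \<Rightarrow> nat \<Rightarrow> 'a set \<Rightarrow> ('a \<Rightarrow> 'a \<Rightarrow> bool) \<Rightarrow> ('a \<Rightarrow> nat) \<Rightarrow> bool" where
  "pq_colouring p q V E f \<longleftrightarrow> (\<forall>v\<in>V. f v < p) \<and>
     (\<forall>u\<in>V. \<forall>v\<in>V. E u v \<longrightarrow>
        int q \<le> \<bar>int (f u) - int (f v)\<bar> \<and> \<bar>int (f u) - int (f v)\<bar> \<le> int p - int q)"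

definition differ_le_one :: "'a set \<Rightarrow> ('a \<Rightarrow> nat) \<Rightarrow> ('a \<Rightarrow> nat) \<Rightarrow> bool" where
  "differ_le_one V f g \<longleftrightarrow> card {v \<in> V. f v \<noteq> g v} \<le> 1"

text \<open>A reconfiguration sequence f_0, ..., f_n from f to g, given as a nonempty list;
its length is n = length fs - 1. Colourings are compared on V only.\<close>
definition reconf_seq :: "nat \<Rightarrow> nat \<Rightarrow> 'a set \<Rightarrow> ('a \<Rightarrow> 'a \<Rightarrow> bool)
    \<Rightarrow> ('a \<Rightarrow> nat) \<Rightarrow> ('a \<Rightarrow> nat) \<Rightarrow> ('a \<Rightarrow> nat) list \<Rightarrow> bool" where
  "reconf_seq p q V E f g fs \<longleftrightarrow> fs \<noteq> [] \<and>
     (\<forall>v\<in>V. hd fs v = f v) \<and> (\<forall>v\<in>V. last fs v = g v) \<and>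
     (\<forall>h\<in>set fs. pq_colouring p q V E h) \<and>
     (\<forall>i. Suc i < length fs \<longrightarrow> differ_le_one V (fs ! i) (fs ! Suc i))"

definition reconfigures :: "nat \<Rightarrow> nat \<Rightarrow> 'a set \<Rightarrow> ('a \<Rightarrow> 'a \<Rightarrow> bool)
    \<Rightarrow> ('a \<Rightarrow> nat) \<Rightarrow> ('a \<Rightarrow> nat) \<Rightarrow> bool" where
  "reconfigures p q V E f g \<longleftrightarrow> (\<exists>fs. reconf_seq p q V E f g fs)"

end

theory Submission
  imports Defs
begin

text \<open>Relative to a fixed colouring \<open>f\<close>, a \<open>(p,q)\<close>-colouring is represented by an integer height
  function \<open>x\<close> (the colouring being \<open>(f + x) mod p\<close>) whose lifted colour difference along every edge
  lies in \<open>[q, p - q]\<close>. As \<open>p < 4q\<close>, each recolouring step lifts to a change of one height by at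
  most \<open>p/2\<close>, and vertices on cycles of tight edges (lifted difference exactly \<open>q\<close>) never change.
  So if \<open>f\<close> reconfigures to \<open>g\<close>, then \<open>g\<close> has a lift \<open>d\<close> vanishing on the frozen vertices of
  the zero lift of \<open>f\<close>, and by connectivity \<open>|d| = O(p |V|)\<close>. Both \<open>0\<close> and \<open>d\<close> descend to
  their pointwise minimum by lowering one non-frozen vertex by one unit at a time, which takes
  \<open>\<Sum>|d| = O(|V|\<^sup>2)\<close> steps.\<close>

section \<open>Reconfiguration sequences\<close>

lemma reconf_seq_iff_successively:
  "reconf_seq p q V E f g fs \<longleftrightarrow> fs \<noteq> [] \<and> (\<forall>v\<in>V. hd fs v = f v) \<and> (\<forall>v\<in>V. last fs v = g v)
     \<and> (\<forall>h\<in>set fs. pq_colouring p q V E h) \<and> successively (differ_le_one V) fs"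
  by (simp add: reconf_seq_def successively_conv_nth)

lemma differ_le_one_sym: "differ_le_one V g h \<longleftrightarrow> differ_le_one V h g"
proof -
  have "{v \<in> V. g v \<noteq> h v} = {v \<in> V. h v \<noteq> g v}" by auto
  then show ?thesis unfolding differ_le_one_def by simp
qed

lemma differ_le_one_if_agree_off:
  assumes "\<And>v. v \<in> V \<Longrightarrow> v \<noteq> w \<Longrightarrow> g v = h v"
  shows "differ_le_one V g h"
proof -
  have "{v \<in> V. g v \<noteq> h v} \<subseteq> {w}" using assms by auto
  then show ?thesis
    unfolding differ_le_one_def using card_mono[of "{w}"] by fastforce
qed

lemma differ_le_one_agree_off:
  assumes "finite V" "differ_le_one V h h'"
  obtains v where "\<And>w. w \<in> V \<Longrightarrow> w \<noteq> v \<Longrightarrow> h w = h' w"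
proof (cases "\<exists>v\<in>V. h v \<noteq> h' v")
  case True
  then obtain v where v: "v \<in> V" "h v \<noteq> h' v" by blast
  have "h w = h' w" if "w \<in> V" "w \<noteq> v" for w
  proof (rule ccontr)
    assume "h w \<noteq> h' w"
    then have "{v, w} \<subseteq> {u \<in> V. h u \<noteq> h' u}" using v that by auto
    then have "card {v, w} \<le> card {u \<in> V. h u \<noteq> h' u}" using assms(1) by (intro card_mono) auto
    then show False using assms(2) \<open>w \<noteq> v\<close> unfolding differ_le_one_def by simp
  qed
  then show ?thesis by (rule that)
qed (use that in blast)

lemma differ_le_one_cong:
  assumes "\<forall>v\<in>V. g v = g' v" "\<forall>v\<in>V. h v = h' v"
  shows "differ_le_one V g h \<longleftrightarrow> differ_le_one V g' h'"
proof -
  have "{v \<in> V. g v \<noteq> h v} = {v \<in> V. g' v \<noteq> h' v}" using assms by auto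
  then show ?thesis unfolding differ_le_one_def by simp
qed

lemma reconf_seq_cong:
  assumes "reconf_seq p q V E f g fs" "\<forall>v\<in>V. f v = f' v" "\<forall>v\<in>V. g v = g' v"
  shows "reconf_seq p q V E f' g' fs"
  using assms unfolding reconf_seq_def by simp

lemma reconf_seq_singleton:
  "pq_colouring p q V E h \<Longrightarrow> \<forall>v\<in>V. h v = g v \<Longrightarrow> reconf_seq p q V E h g [h]"
  unfolding reconf_seq_def by simp

lemma reconf_seq_Cons:
  assumes "reconf_seq p q V E h' g fs" "pq_colouring p q V E h" "differ_le_one V h h'"
  shows "reconf_seq p q V E h g (h # fs)"
proof -
  have "differ_le_one V h (hd fs)"
    using assms differ_le_one_cong[of V h h h' "hd fs"] unfolding reconf_seq_def by simp
  then show ?thesis using assms(1,2) by (simp add: reconf_seq_iff_successively successively_Cons)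
qed

lemma reconf_seq_append:
  assumes fs: "reconf_seq p q V E f g fs" and gs: "reconf_seq p q V E g h gs"
  shows "reconf_seq p q V E f h (fs @ tl gs)"
proof (cases "tl gs")
  case Nil
  then have "gs = [hd gs]" using gs unfolding reconf_seq_def by (cases gs) auto
  then have "\<forall>v\<in>V. g v = h v" using gs unfolding reconf_seq_def by (metis last.simps)
  then show ?thesis using reconf_seq_cong[OF fs] Nil by simp
next
  case (Cons g1 gs')
  then obtain g0 where g0: "gs = g0 # g1 # gs'" using gs unfolding reconf_seq_def by (cases gs) auto
  have "\<forall>v\<in>V. last fs v = g0 v" using fs gs g0 unfolding reconf_seq_def by simp
  moreover have "differ_le_one V g0 g1" using gs g0 unfolding reconf_seq_iff_successively by simp
  ultimately have "differ_le_one V (last fs) g1" using differ_le_one_cong by blast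
  then show ?thesis using fs gs g0
    unfolding reconf_seq_iff_successively by (auto simp: successively_append_iff)
qed

lemma reconf_seq_rev:
  assumes "reconf_seq p q V E f g fs"
  shows "reconf_seq p q V E g f (rev fs)"
proof -
  have "successively (differ_le_one V) fs"
    using assms unfolding reconf_seq_iff_successively by simp
  then have "successively (\<lambda>h h'. differ_le_one V h' h) fs"
    by (rule successively_mono) (simp add: differ_le_one_sym)
  then show ?thesis using assms unfolding reconf_seq_iff_successively by (simp add: hd_rev last_rev)
qed

section \<open>Height functions\<close>

lemma int_eq_if_mod_eq_if_close:
  fixes a b p :: int
  assumes "a mod p = b mod p" "\<bar>a - b\<bar> < p"
  shows "a = b"
proof (rule ccontr)
  assume "a \<noteq> b"
  moreover have "p dvd (a - b)" using assms(1) by (simp add: mod_eq_dvd_iff)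
  ultimately have "\<bar>p\<bar> \<le> \<bar>a - b\<bar>" by (simp add: dvd_imp_le_int)
  then show False using assms(2) by simp
qed

lemma abs_diff_bounds_iff_mod_diff_bounds:
  fixes a b p q :: int
  assumes "0 \<le> a" "a < p" "0 \<le> b" "b < p"
  shows "q \<le> \<bar>a - b\<bar> \<and> \<bar>a - b\<bar> \<le> p - q \<longleftrightarrow> q \<le> (a - b) mod p \<and> (a - b) mod p \<le> p - q"
proof (cases "b \<le> a")
  case True
  then show ?thesis using assms by simp
next
  case False
  have "(a - b) mod p = (a - b + p) mod p" by simp
  also have "\<dots> = a - b + p" using assms False by (intro mod_pos_pos_trivial) auto
  finally show ?thesis using False by auto
qed

lemma sum_excess_fun_upd_decrement:
  fixes x m :: "'a \<Rightarrow> int"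
  assumes "finite V" "v \<in> V" "m v < x v"
  shows "(\<Sum>w\<in>V. nat (x w - m w)) = Suc (\<Sum>w\<in>V. nat ((x(v := x v - 1)) w - m w))"
proof -
  have "(\<Sum>w\<in>V - {v}. nat ((x(v := x v - 1)) w - m w)) = (\<Sum>w\<in>V - {v}. nat (x w - m w))"
    by (rule sum.cong) auto
  then show ?thesis using assms by (simp add: sum.remove)
qed

lemma rtrancl_exits_set:
  "(a, b) \<in> R\<^sup>* \<Longrightarrow> a \<in> A \<Longrightarrow> b \<notin> A \<Longrightarrow> \<exists>u w. (u, w) \<in> R \<and> u \<in> A \<and> w \<notin> A"
  by (induction rule: rtrancl_induct) blast+

lemma rtrancl_cycle_edges:
  "(a, b) \<in> R\<^sup>* \<Longrightarrow> (b, a) \<in> R\<^sup>* \<Longrightarrow> (a, b) \<in> {(u, w) \<in> R. (w, u) \<in> R\<^sup>*}\<^sup>*"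
proof (induction rule: rtrancl_induct)
  case base
  then show ?case by simp
next
  case (step y z)
  have "(a, y) \<in> {(u, w) \<in> R. (w, u) \<in> R\<^sup>*}\<^sup>*"
    using step by (meson converse_rtrancl_into_rtrancl)
  moreover have "(z, y) \<in> R\<^sup>*" using step(1,4) by (meson rtrancl_trans)
  ultimately show ?case using step(2) by (simp add: rtrancl.rtrancl_into_rtrancl)
qed

lemma trancl_cycle_edges:
  assumes "(z, z) \<in> R\<^sup>+"
  shows "(z, z) \<in> {(u, w) \<in> R. (w, u) \<in> R\<^sup>*}\<^sup>+"
proof -
  obtain a where "(z, a) \<in> R" "(a, z) \<in> R\<^sup>*" using assms by (meson tranclD)
  then have "(z, a) \<in> {(u, w) \<in> R. (w, u) \<in> R\<^sup>*}"
    and "(a, z) \<in> {(u, w) \<in> R. (w, u) \<in> R\<^sup>*}\<^sup>*"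
    using rtrancl_cycle_edges[of a z R] by auto
  then show ?thesis by (rule rtrancl_into_trancl2)
qed

locale reference_colouring =
  fixes p q :: nat and V :: "'a set" and E :: "'a \<Rightarrow> 'a \<Rightarrow> bool" and f :: "'a \<Rightarrow> nat"
  assumes q_pos: "0 < q" and p_ge: "2 * q \<le> p" and p_less: "p < 4 * q"
    and graph: "simple_graph V E" and f_colouring: "pq_colouring p q V E f"
begin

lemma p_pos: "0 < p"
  using q_pos p_ge by simp

lemma finite_V: "finite V"
  and edge_in_V: "E a b \<Longrightarrow> a \<in> V \<and> b \<in> V"
  and edge_sym: "E a b \<Longrightarrow> E b a"
  and edge_irrefl: "E a b \<Longrightarrow> a \<noteq> b"
  using graph unfolding simple_graph_def by blast+

definition offset :: "'a \<Rightarrow> 'a \<Rightarrow> int" where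
  "offset a b = (int (f b) - int (f a)) mod int p"

text \<open>A height function \<open>x\<close> lifts the colouring \<open>colour x\<close> to the integers, relative to \<open>f\<close>;
  \<open>slack x a b\<close> is the lifted colour difference along the edge from \<open>a\<close> to \<open>b\<close>.\<close>
definition slack :: "('a \<Rightarrow> int) \<Rightarrow> 'a \<Rightarrow> 'a \<Rightarrow> int" where
  "slack x a b = offset a b + x b - x a"

definition admissible :: "('a \<Rightarrow> int) \<Rightarrow> bool" where
  "admissible x \<longleftrightarrow> (\<forall>a b. E a b \<longrightarrow> int q \<le> slack x a b \<and> slack x a b \<le> int p - int q)"

definition tight :: "('a \<Rightarrow> int) \<Rightarrow> ('a \<times> 'a) set" where
  "tight x = {(a, b). E a b \<and> slack x a b = int q}"

definition frozen :: "('a \<Rightarrow> int) \<Rightarrow> 'a set" where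
  "frozen x = {z. (z, z) \<in> (tight x)\<^sup>+}"

definition colour :: "('a \<Rightarrow> int) \<Rightarrow> 'a \<Rightarrow> nat" where
  "colour x v = nat ((int (f v) + x v) mod int p)"

lemma f_less: "v \<in> V \<Longrightarrow> f v < p"
  using f_colouring unfolding pq_colouring_def by blast

lemma colouring_edge_mod_bounds:
  assumes "pq_colouring p q V E h" "E a b"
  shows "int q \<le> (int (h b) - int (h a)) mod int p \<and> (int (h b) - int (h a)) mod int p \<le> int p - int q"
  using assms edge_in_V[OF assms(2)]
    abs_diff_bounds_iff_mod_diff_bounds[of "int (h b)" "int p" "int (h a)" "int q"]
  unfolding pq_colouring_def by (auto simp: abs_minus_commute)

lemma slack_antisym: "E a b \<Longrightarrow> slack x a b + slack x b a = int p"
proof -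
  assume ab: "E a b"
  have "offset a b mod int p \<noteq> 0"
    using colouring_edge_mod_bounds[OF f_colouring ab] q_pos unfolding offset_def by simp
  moreover have "int (f a) - int (f b) = - (int (f b) - int (f a))" by simp
  ultimately have "offset b a = int p - offset a b"
    unfolding offset_def by (simp only: zmod_zminus1_eq_if) simp
  then show ?thesis unfolding slack_def by simp
qed

lemma admissibleI:
  assumes "\<And>a b. E a b \<Longrightarrow> int q \<le> slack x a b"
  shows "admissible x"
  unfolding admissible_def
proof (intro allI impI conjI)
  fix a b assume ab: "E a b"
  show "int q \<le> slack x a b" using assms[OF ab] .
  show "slack x a b \<le> int p - int q"
    using assms[OF edge_sym[OF ab]] slack_antisym[OF ab, of x] by linarith
qed

lemma admissibleD: "admissible x \<Longrightarrow> E a b \<Longrightarrow> int q \<le> slack x a b \<and> slack x a b \<le> int p - int q"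
  unfolding admissible_def by blast

lemma admissible_zero: "admissible (\<lambda>_. 0)"
  using colouring_edge_mod_bounds[OF f_colouring] unfolding admissible_def slack_def offset_def by simp

lemma slack_add_const [simp]: "slack (\<lambda>v. x v + c) a b = slack x a b"
  unfolding slack_def by simp

lemma admissible_add_const: "admissible x \<Longrightarrow> admissible (\<lambda>v. x v + c)"
  unfolding admissible_def by simp

lemma frozen_add_const: "frozen (\<lambda>v. x v + c) = frozen x"
  unfolding frozen_def tight_def by simp

lemma admissible_min:
  assumes "admissible x" "admissible y"
  shows "admissible (\<lambda>v. min (x v) (y v))"
proof (rule admissibleI)
  fix a b assume "E a b"
  then have "int q \<le> offset a b + x b - x a" "int q \<le> offset a b + y b - y a"
    using admissibleD[OF assms(1)] admissibleD[OF assms(2)] unfolding slack_def by auto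
  then show "int q \<le> slack (\<lambda>v. min (x v) (y v)) a b"
    unfolding slack_def by linarith
qed

lemma admissible_edge_height_diff:
  assumes "admissible x" "E a b"
  shows "\<bar>x b - x a\<bar> \<le> int p"
proof -
  have "0 \<le> offset a b" "offset a b < int p" using p_pos unfolding offset_def by simp_all
  then show ?thesis using admissibleD[OF assms] unfolding slack_def by linarith
qed

lemma int_colour: "int (colour x v) = (int (f v) + x v) mod int p"
  using p_pos by (simp add: colour_def)

lemma colour_less: "colour x v < p"
  using p_pos by (simp add: colour_def nat_less_iff)

lemma colour_add_multiple: "colour (\<lambda>v. x v + int p * c) = colour x"
  by (rule ext) (simp add: colour_def add.assoc[symmetric])

lemma colour_zero: "v \<in> V \<Longrightarrow> colour (\<lambda>_. 0) v = f v"
  using f_less by (simp add: colour_def)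

lemma slack_mod: "slack x a b mod int p = (int (colour x b) - int (colour x a)) mod int p"
proof -
  have "slack x a b = (int (f b) - int (f a)) mod int p + (x b - x a)"
    unfolding slack_def offset_def by simp
  then have "slack x a b mod int p = (int (f b) - int (f a) + (x b - x a)) mod int p"
    by (simp only: mod_add_left_eq)
  moreover have "int (f b) - int (f a) + (x b - x a) = (int (f b) + x b) - (int (f a) + x a)"
    by simp
  ultimately show ?thesis unfolding int_colour by (simp only: mod_diff_eq)
qed

lemma colour_pq_colouring:
  assumes "admissible x"
  shows "pq_colouring p q V E (colour x)"
proof -
  have "int q \<le> \<bar>int (colour x a) - int (colour x b)\<bar> \<and>
      \<bar>int (colour x a) - int (colour x b)\<bar> \<le> int p - int q" if "E a b" for a b
  proof -
    have bounds: "int q \<le> slack x a b \<and> slack x a b \<le> int p - int q" using admissibleD[OF assms that] .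
    then have "slack x a b = (int (colour x b) - int (colour x a)) mod int p"
      using q_pos slack_mod[of x a b] by simp
    with bounds show ?thesis
      using abs_diff_bounds_iff_mod_diff_bounds[of "int (colour x b)" "int p" "int (colour x a)" "int q"]
      by (simp add: colour_less abs_minus_commute)
  qed
  then show ?thesis unfolding pq_colouring_def using colour_less by blast
qed

lemma frozen_subset_V: "frozen x \<subseteq> V"
  unfolding frozen_def tight_def using edge_in_V by (auto dest: tranclD)

text \<open>A frozen vertex has a tight out-edge and a tight in-edge; these pin its height from
  both sides once the heights of its neighbours are fixed.\<close>
lemma frozen_fixed_by_single_change:
  assumes x: "admissible x" and x': "admissible x'" and off: "\<And>w. w \<noteq> v \<Longrightarrow> x' w = x w"
    and z: "z \<in> frozen x"
  shows "x' z = x z"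
proof (cases "z = v")
  case True
  have "(z, z) \<in> (tight x)\<^sup>+" using z unfolding frozen_def by simp
  then obtain a b where za: "(z, a) \<in> tight x" and bz: "(b, z) \<in> tight x"
    by (meson tranclD tranclD2)
  then have "E z a" "E b z" "slack x z a = int q" "slack x b z = int q"
    unfolding tight_def by auto
  moreover have "x' a = x a" "x' b = x b"
    using off edge_irrefl[OF \<open>E z a\<close>] edge_irrefl[OF \<open>E b z\<close>] True by auto
  ultimately show ?thesis
    using admissibleD[OF x' \<open>E z a\<close>] admissibleD[OF x' \<open>E b z\<close>] unfolding slack_def by linarith
qed (use off in simp)

lemma frozen_subset_of_single_change:
  assumes x: "admissible x" and x': "admissible x'" and off: "\<And>w. w \<noteq> v \<Longrightarrow> x' w = x w"
  shows "frozen x \<subseteq> frozen x'"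
proof
  fix z assume "z \<in> frozen x"
  let ?C = "{(u, w) \<in> tight x. (w, u) \<in> (tight x)\<^sup>*}"
  have "?C \<subseteq> tight x'"
  proof
    fix e assume "e \<in> ?C"
    then obtain u w where e: "e = (u, w)" "(u, w) \<in> tight x" "(w, u) \<in> (tight x)\<^sup>*" by blast
    then have "u \<in> frozen x" "w \<in> frozen x"
      unfolding frozen_def by (auto intro: rtrancl_into_trancl1 rtrancl_into_trancl2)
    then have "x' u = x u" "x' w = x w"
      using frozen_fixed_by_single_change[OF x x' off] by auto
    then show "e \<in> tight x'" using e unfolding tight_def slack_def by simp
  qed
  then show "z \<in> frozen x'"
    using trancl_cycle_edges[of z "tight x"] \<open>z \<in> frozen x\<close> trancl_mono
    unfolding frozen_def by blast
qed

lemma frozen_eq_of_single_change: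
  assumes "admissible x" "admissible x'" "\<And>w. w \<noteq> v \<Longrightarrow> x' w = x w"
  shows "frozen x' = frozen x"
  using frozen_subset_of_single_change[of x x' v] frozen_subset_of_single_change[of x' x v] assms
  by (metis subset_antisym)

text \<open>Since \<open>p < 4q\<close>, a shift of at most \<open>p/2\<close> determines the new slack of every edge at \<open>v\<close>
  from its residue: it is the admissible representative.\<close>
lemma lift_by_small_shift:
  assumes x: "admissible x" and h': "pq_colouring p q V E h'" and "v \<in> V"
    and agree: "\<And>w. w \<in> V \<Longrightarrow> w \<noteq> v \<Longrightarrow> colour x w = h' w"
    and s_small: "2 * \<bar>s\<bar> \<le> int p" and s_mod: "s mod int p = (int (h' v) - int (colour x v)) mod int p"
  shows "admissible (x(v := x v + s))" "\<forall>w\<in>V. colour (x(v := x v + s)) w = h' w"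
proof -
  let ?x' = "x(v := x v + s)"
  have "int (colour ?x' v) = (int (colour x v) + s) mod int p"
    unfolding int_colour by (simp add: mod_add_left_eq add.assoc)
  also have "\<dots> = int (h' v) mod int p"
    using s_mod by (metis add_diff_cancel_left' mod_add_right_eq add_diff_eq)
  also have "\<dots> = int (h' v)" using h' \<open>v \<in> V\<close> unfolding pq_colouring_def by simp
  finally have "colour ?x' v = h' v" by simp
  then show colour': "\<forall>w\<in>V. colour ?x' w = h' w"
    using agree by (auto simp: colour_def)
  have slack_into_v: "slack ?x' a v = (int (h' v) - int (h' a)) mod int p" if av: "E a v" for a
  proof (rule int_eq_if_mod_eq_if_close)
    have "a \<in> V" "a \<noteq> v" using edge_in_V[OF av] edge_irrefl[OF av] by auto
    show "slack ?x' a v mod int p = (int (h' v) - int (h' a)) mod int p mod int p"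
      using colour' \<open>a \<in> V\<close> \<open>v \<in> V\<close> by (simp add: slack_mod)
    have "slack ?x' a v = slack x a v + s" using \<open>a \<noteq> v\<close> by (simp add: slack_def)
    then show "\<bar>slack ?x' a v - (int (h' v) - int (h' a)) mod int p\<bar> < int p"
      using admissibleD[OF x av] colouring_edge_mod_bounds[OF h' av] s_small p_less by linarith
  qed
  show "admissible ?x'"
  proof (rule admissibleI)
    fix a b assume ab: "E a b"
    consider "b = v" | "a = v" | "a \<noteq> v" "b \<noteq> v" by blast
    then show "int q \<le> slack ?x' a b"
    proof cases
      case 1
      then show ?thesis using slack_into_v colouring_edge_mod_bounds[OF h' ab] ab by simp
    next
      case 2
      then have "E b v" using edge_sym[OF ab] by simp
      then show ?thesis using 2 slack_antisym[OF ab, of ?x'] slack_into_v[OF \<open>E b v\<close>]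
          colouring_edge_mod_bounds[OF h' \<open>E b v\<close>] by simp
    next
      case 3
      then show ?thesis using admissibleD[OF x ab] by (simp add: slack_def)
    qed
  qed
qed

lemma lift_step:
  assumes x: "admissible x" and h': "pq_colouring p q V E h'"
    and agree: "\<And>w. w \<in> V \<Longrightarrow> w \<noteq> v \<Longrightarrow> colour x w = h' w"
  obtains x' where "admissible x'" "\<forall>w\<in>V. colour x' w = h' w" "\<And>w. w \<noteq> v \<Longrightarrow> x' w = x w"
proof (cases "v \<in> V")
  case False
  then show ?thesis using that[of x] x agree by blast
next
  case True
  define r where "r = (int (h' v) - int (colour x v)) mod int p"
  define s where "s = (if 2 * r \<le> int p then r else r - int p)"
  have r: "0 \<le> r" "r < int p" using p_pos by (simp_all add: r_def)
  have "2 * \<bar>s\<bar> \<le> int p" using r by (auto simp: s_def)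
  moreover have "s mod int p = (int (h' v) - int (colour x v)) mod int p"
    using r by (simp add: s_def r_def)
  ultimately show ?thesis
    using lift_by_small_shift[OF x h' True agree] that[of "x(v := x v + s)"] by simp
qed

lemma lift_reconf_seq:
  assumes fs: "reconf_seq p q V E g h fs" and x: "admissible x" and xg: "\<forall>v\<in>V. colour x v = g v"
  obtains y where "admissible y" "\<forall>v\<in>V. colour y v = h v" "frozen y = frozen x"
    "\<forall>z\<in>frozen x. y z = x z"
proof -
  have "\<exists>y. admissible y \<and> (\<forall>v\<in>V. colour y v = (fs ! i) v) \<and> frozen y = frozen x
      \<and> (\<forall>z\<in>frozen x. y z = x z)" if "i < length fs" for i
    using that
  proof (induction i)
    case 0
    then show ?case using fs x xg unfolding reconf_seq_def by (auto simp: hd_conv_nth)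
  next
    case (Suc i)
    then obtain y where y: "admissible y" "\<forall>v\<in>V. colour y v = (fs ! i) v" "frozen y = frozen x"
      "\<forall>z\<in>frozen x. y z = x z" by auto
    have "differ_le_one V (fs ! i) (fs ! Suc i)" "pq_colouring p q V E (fs ! Suc i)"
      using fs Suc.prems unfolding reconf_seq_def by auto
    then obtain v where "\<And>w. w \<in> V \<Longrightarrow> w \<noteq> v \<Longrightarrow> (fs ! i) w = (fs ! Suc i) w"
      using differ_le_one_agree_off finite_V by blast
    then obtain y' where y': "admissible y'" "\<forall>w\<in>V. colour y' w = (fs ! Suc i) w"
      "\<And>w. w \<noteq> v \<Longrightarrow> y' w = y w"
      using lift_step[OF y(1) \<open>pq_colouring _ _ _ _ (fs ! Suc i)\<close>] y(2) by metis
    have "frozen y' = frozen x" using frozen_eq_of_single_change[OF y(1) y'(1,3)] y(3) by simp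
    moreover have "\<forall>z\<in>frozen x. y' z = x z"
      using frozen_fixed_by_single_change[OF y(1) y'(1,3)] y(3,4) by simp
    ultimately show ?case using y' by blast
  qed
  from this[of "length fs - 1"] show ?thesis
    using fs that unfolding reconf_seq_def by (auto simp: last_conv_nth)
qed

lemma admissible_lower_if_no_tight_in_edge:
  assumes x: "admissible x" and no_tight: "\<And>a. (a, v) \<notin> tight x"
  shows "admissible (x(v := x v - 1))"
proof (rule admissibleI)
  fix a b assume ab: "E a b"
  show "int q \<le> slack (x(v := x v - 1)) a b"
  proof (cases "b = v")
    case True
    then have "int q < slack x a b" using no_tight[of a] admissibleD[OF x ab] ab
      unfolding tight_def by force
    then show ?thesis using True edge_irrefl[OF ab] by (simp add: slack_def)
  qed (use admissibleD[OF x ab] in \<open>auto simp: slack_def\<close>)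
qed

text \<open>Among the vertices of maximal excess \<open>x - m\<close> the tight edges form no cycle, as frozen
  vertices have excess zero; a minimal one for this relation has no tight in-edge at all, since
  a tight edge from a vertex of smaller excess would violate admissibility of \<open>m\<close>.\<close>
lemma exists_excess_vertex_without_tight_in_edge:
  assumes m: "admissible m" and frozen_eq: "\<forall>z\<in>frozen x. x z = m z"
    and v0: "v0 \<in> V" "m v0 < x v0"
  obtains v where "v \<in> V" "m v < x v" "\<And>a. (a, v) \<notin> tight x"
proof -
  define top where "top = Max ((\<lambda>v. x v - m v) ` V)"
  define S where "S = {v \<in> V. x v - m v = top}"
  have le_top: "x v - m v \<le> top" if "v \<in> V" for v
    unfolding top_def using finite_V that by simp
  have "top \<in> (\<lambda>v. x v - m v) ` V" unfolding top_def using finite_V v0(1) by (intro Max_in) auto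
  then have "S \<noteq> {}" unfolding S_def by auto
  have top_pos: "0 < top" using le_top[OF v0(1)] v0(2) by simp
  let ?R = "tight x \<inter> S \<times> S"
  have "acyclic ?R"
  proof (rule acyclicI, intro allI notI)
    fix z assume "(z, z) \<in> ?R\<^sup>+"
    then have "z \<in> frozen x" "z \<in> S"
      unfolding frozen_def using trancl_mono[of "(z, z)" ?R "tight x"] by (auto dest: tranclD)
    then show False using frozen_eq top_pos unfolding S_def by simp
  qed
  moreover have "finite ?R" using finite_V unfolding S_def by (auto intro: finite_subset)
  ultimately obtain v where vS: "v \<in> S" and minimal: "\<And>a. (a, v) \<in> ?R \<Longrightarrow> a \<notin> S"
    using wfE_min[of ?R _ S] finite_acyclic_wf \<open>S \<noteq> {}\<close> by (metis ex_in_conv)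
  have "v \<in> V" "x v - m v = top" using vS unfolding S_def by auto
  have "(a, v) \<notin> tight x" for a
  proof
    assume av: "(a, v) \<in> tight x"
    then have "E a v" "a \<in> V" unfolding tight_def using edge_in_V by auto
    then have "x a - m a < top" using minimal[of a] vS av le_top[of a] unfolding S_def by force
    then show False
      using av admissibleD[OF m \<open>E a v\<close>] \<open>x v - m v = top\<close> unfolding tight_def slack_def by simp
  qed
  then show ?thesis using that \<open>v \<in> V\<close> \<open>x v - m v = top\<close> top_pos by simp
qed

lemma descend_reconf_seq:
  assumes m: "admissible m" and "admissible x" "\<forall>v\<in>V. m v \<le> x v" "\<forall>z\<in>frozen x. x z = m z"
  shows "\<exists>cs. reconf_seq p q V E (colour x) (colour m) cs \<and> length cs - 1 \<le> (\<Sum>v\<in>V. nat (x v - m v))"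
  using assms(2-)
proof (induction x rule: measure_induct_rule[of "\<lambda>x. \<Sum>v\<in>V. nat (x v - m v)"])
  case (less x)
  show ?case
  proof (cases "\<forall>v\<in>V. x v = m v")
    case True
    then have "reconf_seq p q V E (colour x) (colour m) [colour x]"
      by (intro reconf_seq_singleton colour_pq_colouring less.prems(1)) (simp add: colour_def)
    then show ?thesis by fastforce
  next
    case False
    then obtain v0 where "v0 \<in> V" "m v0 < x v0" using less.prems(2) by force
    then obtain v where v: "v \<in> V" "m v < x v" and "\<And>a. (a, v) \<notin> tight x"
      using exists_excess_vertex_without_tight_in_edge[OF m less.prems(3)] by blast
    then have x': "admissible (x(v := x v - 1))"
      using admissible_lower_if_no_tight_in_edge[OF less.prems(1)] by blast
    let ?x' = "x(v := x v - 1)"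
    have frozen': "frozen ?x' = frozen x"
      using frozen_eq_of_single_change[OF less.prems(1) x'] by simp
    have measure: "(\<Sum>w\<in>V. nat (x w - m w)) = Suc (\<Sum>w\<in>V. nat (?x' w - m w))"
      using sum_excess_fun_upd_decrement[of V v m x] finite_V v by simp
    moreover have "\<forall>w\<in>V. m w \<le> ?x' w" "\<forall>z\<in>frozen ?x'. ?x' z = m z"
      using less.prems(2,3) v frozen_fixed_by_single_change[OF less.prems(1) x', of _ v] frozen'
      by auto
    ultimately obtain cs where cs: "reconf_seq p q V E (colour ?x') (colour m) cs"
      "length cs - 1 \<le> (\<Sum>w\<in>V. nat (?x' w - m w))"
      using less.IH[OF _ x'] by fastforce
    have "differ_le_one V (colour x) (colour ?x')"
      by (rule differ_le_one_if_agree_off[of _ v]) (simp add: colour_def)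
    then have "reconf_seq p q V E (colour x) (colour m) (colour x # cs)"
      using reconf_seq_Cons[OF cs(1) colour_pq_colouring[OF less.prems(1)]] by blast
    moreover have "cs \<noteq> []" using cs(1) unfolding reconf_seq_def by simp
    ultimately show ?thesis using cs(2) measure by (intro exI[of _ "colour x # cs"]) simp
  qed
qed

lemma admissible_height_spread:
  assumes x: "admissible x" and conn: "graph_connected V E" and r: "r \<in> V" and v: "v \<in> V"
  shows "\<bar>x v - x r\<bar> \<le> int (p * card V)"
proof -
  define B where "B k = {v \<in> V. \<bar>x v - x r\<bar> \<le> int (k * p)}" for k
  have B_V: "B k \<subseteq> V" for k unfolding B_def by auto
  then have finite_B: "finite (B k)" for k using finite_V by (rule finite_subset)
  have B_mono: "B k \<subseteq> B (Suc k)" for k unfolding B_def by force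
  have "B k = V \<or> k + 1 \<le> card (B k)" for k
  proof (induction k)
    case 0
    have "r \<in> B 0" using r unfolding B_def by simp
    then show ?case using finite_B[of 0] by (auto simp: Suc_le_eq card_gt_0_iff)
  next
    case (Suc k)
    show ?case
    proof (cases "B k = V")
      case True
      then show ?thesis using B_V[of "Suc k"] B_mono[of k] by blast
    next
      case False
      then obtain w where "w \<in> V" "w \<notin> B k" using B_V by blast
      moreover have "(r, w) \<in> {(a, b). E a b}\<^sup>*" "r \<in> B k"
        using conn r \<open>w \<in> V\<close> unfolding graph_connected_def B_def by auto
      ultimately obtain a b where ab: "E a b" "a \<in> B k" "b \<notin> B k"
        using rtrancl_exits_set[of r w "{(a, b). E a b}" "B k"] by auto
      then have "b \<in> B (Suc k)"
        using admissible_edge_height_diff[OF x ab(1)] edge_in_V[OF ab(1)] unfolding B_def by auto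
      then have "card (B k) < card (B (Suc k))"
        using ab(3) B_mono finite_B by (intro psubset_card_mono) auto
      then show ?thesis using Suc.IH False by simp
    qed
  qed
  moreover have "card (B (card V)) \<le> card V" using B_V finite_V by (rule card_mono[rotated])
  ultimately have "B (card V) = V" by (metis Suc_eq_plus1 Suc_n_not_le_n le_trans)
  then show ?thesis using v unfolding B_def by (auto simp: mult.commute)
qed

lemma reconf_seq_between_heights:
  assumes x: "admissible x" and y: "admissible y"
    and frozen_eq: "frozen x = frozen y" and agree: "\<forall>z\<in>frozen x. x z = y z"
  shows "\<exists>cs. reconf_seq p q V E (colour x) (colour y) cs \<and> length cs - 1 \<le> (\<Sum>v\<in>V. nat \<bar>x v - y v\<bar>)"
proof -
  define m where "m v = min (x v) (y v)" for v
  have m: "admissible m" unfolding m_def using admissible_min[OF x y] .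
  obtain cs1 where cs1: "reconf_seq p q V E (colour x) (colour m) cs1"
    "length cs1 - 1 \<le> (\<Sum>v\<in>V. nat (x v - m v))"
    using descend_reconf_seq[OF m x] agree unfolding m_def by auto
  obtain cs2 where cs2: "reconf_seq p q V E (colour y) (colour m) cs2"
    "length cs2 - 1 \<le> (\<Sum>v\<in>V. nat (y v - m v))"
    using descend_reconf_seq[OF m y] agree frozen_eq unfolding m_def by auto
  have "reconf_seq p q V E (colour x) (colour y) (cs1 @ tl (rev cs2))"
    using reconf_seq_append[OF cs1(1) reconf_seq_rev[OF cs2(1)]] .
  moreover have "cs1 \<noteq> []" "cs2 \<noteq> []" using cs1 cs2 unfolding reconf_seq_def by auto
  then have "length (cs1 @ tl (rev cs2)) - 1 = (length cs1 - 1) + (length cs2 - 1)" by (cases cs1) auto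
  moreover have "(\<Sum>v\<in>V. nat (x v - m v)) + (\<Sum>v\<in>V. nat (y v - m v)) = (\<Sum>v\<in>V. nat \<bar>x v - y v\<bar>)"
    unfolding m_def by (simp add: sum.distrib[symmetric]) (rule sum.cong; simp add: min_def)
  ultimately show ?thesis using cs1(2) cs2(2) by (intro exI[of _ "cs1 @ tl (rev cs2)"]) simp
qed

text \<open>The lift is shifted by a multiple of \<open>p\<close> so that the height of a root vertex lies in \<open>[0, p)\<close>;
  choosing a frozen root when there is one leaves the frozen heights at \<open>0\<close>.\<close>
lemma bounded_lift:
  assumes conn: "graph_connected V E" and "V \<noteq> {}" and "reconfigures p q V E f g"
  obtains d where "admissible d" "\<forall>v\<in>V. colour d v = g v" "frozen d = frozen (\<lambda>_. 0)"
    "\<forall>z\<in>frozen (\<lambda>_. 0). d z = 0" "\<forall>v\<in>V. \<bar>d v\<bar> \<le> int (p * (card V + 1))"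
proof -
  obtain fs where "reconf_seq p q V E f g fs" using assms(3) unfolding reconfigures_def by blast
  then obtain y where y: "admissible y" "\<forall>v\<in>V. colour y v = g v" "frozen y = frozen (\<lambda>_. 0)"
    "\<forall>z\<in>frozen (\<lambda>_. 0). y z = 0"
    using lift_reconf_seq[OF _ admissible_zero] colour_zero by (metis (no_types, lifting))
  obtain r where r: "r \<in> V" "frozen (\<lambda>_. 0) \<noteq> {} \<Longrightarrow> r \<in> frozen (\<lambda>_. 0)"
    using frozen_subset_V \<open>V \<noteq> {}\<close> by blast
  define k where "k = - (y r div int p)"
  define d where "d v = y v + int p * k" for v
  have d: "admissible d" "colour d = colour y" "frozen d = frozen y"
    unfolding d_def using admissible_add_const[OF y(1)] colour_add_multiple frozen_add_const by simp_all
  have "d r = y r mod int p" unfolding d_def k_def by (simp add: minus_mult_div_eq_mod)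
  then have "0 \<le> d r" "d r < int p" using p_pos by simp_all
  moreover have "d z = 0" if "z \<in> frozen (\<lambda>_. 0)" for z
  proof -
    have "y r = 0" using that r(2) y(4) by blast
    then show ?thesis using that y(4) unfolding d_def k_def by simp
  qed
  moreover have "\<bar>d v\<bar> \<le> int (p * (card V + 1))" if "v \<in> V" for v
    using admissible_height_spread[OF d(1) conn r(1) that] calculation(1,2) by (simp add: algebra_simps)
  ultimately show ?thesis using that d y by simp
qed

lemma reconf_seq_quadratic:
  assumes conn: "graph_connected V E" and "reconfigures p q V E f g"
  shows "\<exists>fs. reconf_seq p q V E f g fs \<and> length fs - 1 \<le> 2 * p * (card V)\<^sup>2"
proof (cases "V = {}")
  case True
  then have "reconf_seq p q V E f g [f]" using f_colouring unfolding reconf_seq_def by simp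
  then show ?thesis by fastforce
next
  case False
  define n where "n = card V"
  have "1 \<le> n" using False finite_V unfolding n_def by (simp add: Suc_le_eq card_gt_0_iff)
  obtain d where d: "admissible d" "\<forall>v\<in>V. colour d v = g v" "frozen d = frozen (\<lambda>_. 0)"
    "\<forall>z\<in>frozen (\<lambda>_. 0). d z = 0" "\<forall>v\<in>V. \<bar>d v\<bar> \<le> int (p * (n + 1))"
    using bounded_lift[OF conn False assms(2)] unfolding n_def by blast
  obtain cs where cs: "reconf_seq p q V E (colour (\<lambda>_. 0)) (colour d) cs"
    "length cs - 1 \<le> (\<Sum>v\<in>V. nat \<bar>0 - d v\<bar>)"
    using reconf_seq_between_heights[OF admissible_zero d(1)] d(3,4) by auto
  have "(\<Sum>v\<in>V. nat \<bar>0 - d v\<bar>) \<le> n * (p * (n + 1))"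
    using sum_bounded_above[of V "\<lambda>v. nat \<bar>0 - d v\<bar>" "p * (n + 1)"] d(5) unfolding n_def
    by (simp add: nat_le_iff)
  also have "\<dots> \<le> 2 * p * n\<^sup>2" using \<open>1 \<le> n\<close> by (simp add: power2_eq_square algebra_simps)
  finally have "length cs - 1 \<le> 2 * p * (card V)\<^sup>2" using cs(2) unfolding n_def by linarith
  moreover have "reconf_seq p q V E f g cs" using reconf_seq_cong[OF cs(1)] colour_zero d(2) by simp
  ultimately show ?thesis by blast
qed

end

theorem corollary2p11:
  fixes p q :: nat
  assumes "0 < q" and "2 * q \<le> p" and "p < 4 * q"
  shows "\<exists>C :: nat. \<forall>(V :: nat set) E f g.
           simple_graph V E \<longrightarrow> graph_connected V E \<longrightarrow>
           pq_colouring p q V E f \<longrightarrow> pq_colouring p q V E g \<longrightarrow>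
           reconfigures p q V E f g \<longrightarrow>
           (\<exists>fs. reconf_seq p q V E f g fs \<and> length fs - 1 \<le> C * (card V)\<^sup>2)"
proof (intro exI[of _ "2 * p"] allI impI)
  fix V :: "nat set" and E f g
  assume "simple_graph V E" "graph_connected V E" "pq_colouring p q V E f"
    "pq_colouring p q V E g" "reconfigures p q V E f g"
  then interpret reference_colouring p q V E f using assms by unfold_locales
  show "\<exists>fs. reconf_seq p q V E f g fs \<and> length fs - 1 \<le> 2 * p * (card V)\<^sup>2"
    using reconf_seq_quadratic \<open>graph_connected V E\<close> \<open>reconfigures p q V E f g\<close> by blast
qed

end
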